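(* Let $R$ be a ring and let $A=\sigma(R)\langle x_1,\dots,x_n\rangle$ be a bijective skew PBW extension of $R$ with associated family $\Sigma$. Suppose $R$ is $\Sigma$-rigid, Abelian and NI. If $R$ is a right (resp. left) p.p.-ring, then $A$ has Property $(a.c.)$ on the right (resp. left).
   Context: All rings are associative with identity. For $S\subseteq T$ (a ring $T$), $r_T(S)=\{a\in T: Sa=0\}$ and $\ell_T(S)=\{a\in T: aS=0\}$. A ring $A$ is a skew PBW extension of $R$, written $A=\sigma(R)\langle x_1,\dots,x_n\rangle$, if: (i) $R$ is a subring of $A$ with the same identity; (ii) there are elements $x_1,\dots,x_n\in A$ such that $A$ is a free left $R$-module with basis the standard monomials $x^\alpha=x_1^{\alpha_1}\cdots x_n^{\alpha_n}$, $\alpha\in\mathbb N^n$ (with $x^0=1$); (iii) for each $i$ and each nonzero $r\in R$ there is nonzero $c_{i,r}\in R$ with $x_ir-c_{i,r}x_i\in R$; (iv) for all $i,j$ there is nonzero $d_{i,j}\in R$ with $x_jx_i-d_{i,j}x_ix_j\in R+Rx_1+\cdots+Rx_n$. For such $A$ there are injective endomorphisms $\sigma_i$ of $R$ and $\sigma_i$-derivations $\delta_i$ of $R$ with $x_ir=\sigma_i(r)x_i+\delta_i(r)$ for all $r\in R$; $\Sigma=\{\sigma_1,\dots,\sigma_n\}$. For $\alpha\in\mathbb N^n$, $\sigma^\alpha=\sigma_1^{\alpha_1}\circ\cdots\circ\sigma_n^{\alpha_n}$. The extension is bijective if each $\sigma_i$ is bijective and each $d_{i,j}$ ($1\le i<j\le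 n$) is invertible. $R$ is $\Sigma$-rigid if for $a\in R$ and $\alpha\in\mathbb N^n$, $a\sigma^\alpha(a)=0$ implies $a=0$. $R$ is Abelian if every idempotent of $R$ is central. $R$ is NI if the upper nilradical $\mathrm{nil}^*(R)$ (sum of all nil ideals) equals the set $\mathrm{nil}(R)$ of nilpotent elements. $R$ is a right (resp. left) p.p.-ring if for each $a\in R$ there is an idempotent $e$ with $r_R(a)=eR$ (resp. $\ell_R(a)=Re$). A ring $T$ has Property $(a.c.)$ on the right if for every finitely generated right ideal $I$ of $T$ there is $c\in T$ with $r_T(I)=r_T(cT)$; on the left if for every finitely generated left ideal $I$ there is $c\in T$ with $\ell_T(I)=\ell_T(Tc)$. *)

theory Defs
  imports Main
begin

(* Indices of the variables are 0..n-1 (x 0, ..., x (n-1)) instead of 1..n. *)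

definition exps :: "nat \<Rightarrow> (nat \<Rightarrow> nat) set" where
  "exps n = {\<alpha>. \<forall>i\<ge>n. \<alpha> i = 0}"

definition mono :: "(nat \<Rightarrow> 'a::ring_1) \<Rightarrow> nat \<Rightarrow> (nat \<Rightarrow> nat) \<Rightarrow> 'a" where
  "mono x n \<alpha> = foldr (\<lambda>i m. x i ^ \<alpha> i * m) [0..<n] 1"

definition subring :: "'a::ring_1 set \<Rightarrow> bool" where
  "subring R \<longleftrightarrow> 1 \<in> R \<and> 0 \<in> R \<and> (\<forall>a\<in>R. \<forall>b\<in>R. a + b \<in> R \<and> a - b \<in> R \<and> a * b \<in> R)"

definition lin_span :: "'a::ring_1 set \<Rightarrow> (nat \<Rightarrow> 'a) \<Rightarrow> nat \<Rightarrow> 'a set" where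
  "lin_span R x n = {r0 + (\<Sum>k<n. r k * x k) | r0 r. r0 \<in> R \<and> (\<forall>k<n. r k \<in> R)}"

(* A (= the whole ring 'a) is a skew PBW extension of R in the variables x_0..x_{n-1} *)
definition skew_PBW :: "'a::ring_1 set \<Rightarrow> (nat \<Rightarrow> 'a) \<Rightarrow> nat \<Rightarrow> bool" where
  "skew_PBW R x n \<longleftrightarrow>
     subring R
   \<and> (\<forall>a. \<exists>S c. finite S \<and> S \<subseteq> exps n \<and> (\<forall>\<alpha>\<in>S. c \<alpha> \<in> R) \<and> a = (\<Sum>\<alpha>\<in>S. c \<alpha> * mono x n \<alpha>))
   \<and> (\<forall>S c. finite S \<and> S \<subseteq> exps n \<and> (\<forall>\<alpha>\<in>S. c \<alpha> \<in> R) \<and> (\<Sum>\<alpha>\<in>S. c \<alpha> * mono x n \<alpha>) = 0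
          \<longrightarrow> (\<forall>\<alpha>\<in>S. c \<alpha> = 0))
   \<and> (\<forall>i<n. \<forall>r\<in>R. r \<noteq> 0 \<longrightarrow> (\<exists>c\<in>R. c \<noteq> 0 \<and> x i * r - c * x i \<in> R))
   \<and> (\<forall>i<n. \<forall>j<n. \<exists>d\<in>R. d \<noteq> 0 \<and> x j * x i - d * x i * x j \<in> lin_span R x n)"

(* sigma i, delta i are the injective endomorphisms / sigma_i-derivations of R with
   x_i r = sigma_i(r) x_i + delta_i(r) (they are uniquely determined by freeness) *)
definition skew_PBW_maps ::
  "'a::ring_1 set \<Rightarrow> (nat \<Rightarrow> 'a) \<Rightarrow> nat \<Rightarrow> (nat \<Rightarrow> 'a \<Rightarrow> 'a) \<Rightarrow> (nat \<Rightarrow> 'a \<Rightarrow> 'a) \<Rightarrow> bool" where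
  "skew_PBW_maps R x n \<sigma> \<delta> \<longleftrightarrow>
     (\<forall>i<n. (\<forall>r\<in>R. \<sigma> i r \<in> R \<and> \<delta> i r \<in> R \<and> x i * r = \<sigma> i r * x i + \<delta> i r)
        \<and> inj_on (\<sigma> i) R \<and> \<sigma> i 1 = 1
        \<and> (\<forall>a\<in>R. \<forall>b\<in>R. \<sigma> i (a + b) = \<sigma> i a + \<sigma> i b \<and> \<sigma> i (a * b) = \<sigma> i a * \<sigma> i b
              \<and> \<delta> i (a + b) = \<delta> i a + \<delta> i b \<and> \<delta> i (a * b) = \<sigma> i a * \<delta> i b + \<delta> i a * b))"

definition unit_in :: "'a::ring_1 set \<Rightarrow> 'a \<Rightarrow> bool" where
  "unit_in R d \<longleftrightarrow> d \<in> R \<and> (\<exists>e\<in>R. d * e = 1 \<and> e * d = 1)"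

definition bijective_skew_PBW ::
  "'a::ring_1 set \<Rightarrow> (nat \<Rightarrow> 'a) \<Rightarrow> nat \<Rightarrow> (nat \<Rightarrow> 'a \<Rightarrow> 'a) \<Rightarrow> bool" where
  "bijective_skew_PBW R x n \<sigma> \<longleftrightarrow>
     (\<forall>i<n. bij_betw (\<sigma> i) R R)
   \<and> (\<forall>i j. i < j \<and> j < n \<longrightarrow>
        (\<exists>d. unit_in R d \<and> d \<noteq> 0 \<and> x j * x i - d * x i * x j \<in> lin_span R x n))"

definition sigma_pow :: "(nat \<Rightarrow> 'a \<Rightarrow> 'a) \<Rightarrow> nat \<Rightarrow> (nat \<Rightarrow> nat) \<Rightarrow> 'a \<Rightarrow> 'a" where
  "sigma_pow \<sigma> n \<alpha> = foldr (\<lambda>i f. (\<sigma> i ^^ \<alpha> i) \<circ> f) [0..<n] id"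

definition Sigma_rigid :: "'a::ring_1 set \<Rightarrow> (nat \<Rightarrow> 'a \<Rightarrow> 'a) \<Rightarrow> nat \<Rightarrow> bool" where
  "Sigma_rigid R \<sigma> n \<longleftrightarrow> (\<forall>a\<in>R. \<forall>\<alpha>. a * sigma_pow \<sigma> n \<alpha> a = 0 \<longrightarrow> a = 0)"

definition abelian_ring :: "'a::ring_1 set \<Rightarrow> bool" where
  "abelian_ring R \<longleftrightarrow> (\<forall>e\<in>R. e * e = e \<longrightarrow> (\<forall>r\<in>R. e * r = r * e))"

definition nilpotents :: "'a::ring_1 set \<Rightarrow> 'a set" where
  "nilpotents R = {a\<in>R. \<exists>k. a ^ k = 0}"

definition two_sided_ideal :: "'a::ring_1 set \<Rightarrow> 'a set \<Rightarrow> bool" where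
  "two_sided_ideal R I \<longleftrightarrow> I \<subseteq> R \<and> 0 \<in> I \<and> (\<forall>a\<in>I. \<forall>b\<in>I. a + b \<in> I \<and> - a \<in> I)
     \<and> (\<forall>a\<in>I. \<forall>r\<in>R. r * a \<in> I \<and> a * r \<in> I)"

definition nil_ideal :: "'a::ring_1 set \<Rightarrow> 'a set \<Rightarrow> bool" where
  "nil_ideal R I \<longleftrightarrow> two_sided_ideal R I \<and> I \<subseteq> nilpotents R"

(* upper nilradical: sum of all nil ideals (finite sums of elements of nil ideals) *)
definition upper_nilradical :: "'a::ring_1 set \<Rightarrow> 'a set" where
  "upper_nilradical R = {sum_list ys | ys. \<forall>y\<in>set ys. \<exists>I. nil_ideal R I \<and> y \<in> I}"

definition NI_ring :: "'a::ring_1 set \<Rightarrow> bool" where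
  "NI_ring R \<longleftrightarrow> upper_nilradical R = nilpotents R"

definition r_ann :: "'a::ring_1 set \<Rightarrow> 'a set \<Rightarrow> 'a set" where
  "r_ann T S = {a\<in>T. \<forall>s\<in>S. s * a = 0}"

definition l_ann :: "'a::ring_1 set \<Rightarrow> 'a set \<Rightarrow> 'a set" where
  "l_ann T S = {a\<in>T. \<forall>s\<in>S. a * s = 0}"

definition right_pp :: "'a::ring_1 set \<Rightarrow> bool" where
  "right_pp R \<longleftrightarrow> (\<forall>a\<in>R. \<exists>e\<in>R. e * e = e \<and> r_ann R {a} = {e * r | r. r \<in> R})"

definition left_pp :: "'a::ring_1 set \<Rightarrow> bool" where
  "left_pp R \<longleftrightarrow> (\<forall>a\<in>R. \<exists>e\<in>R. e * e = e \<and> l_ann R {a} = {r * e | r. r \<in> R})"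

(* Property (a.c.) for the ring T = UNIV :: 'a set.
   The right ideal generated by g_0..g_{m-1} is {sum g_k t_k}. *)
definition right_ideal_gen :: "(nat \<Rightarrow> 'a::ring_1) \<Rightarrow> nat \<Rightarrow> 'a set" where
  "right_ideal_gen g m = {(\<Sum>k<m. g k * t k) | t. True}"

definition left_ideal_gen :: "(nat \<Rightarrow> 'a::ring_1) \<Rightarrow> nat \<Rightarrow> 'a set" where
  "left_ideal_gen g m = {(\<Sum>k<m. t k * g k) | t. True}"

definition ac_right :: "'a::ring_1 itself \<Rightarrow> bool" where
  "ac_right _ \<longleftrightarrow> (\<forall>(g::nat \<Rightarrow> 'a) m. \<exists>c. r_ann UNIV (right_ideal_gen g m) = r_ann UNIV {c * t | t. True})"

definition ac_left :: "'a::ring_1 itself \<Rightarrow> bool" where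
  "ac_left _ \<longleftrightarrow> (\<forall>(g::nat \<Rightarrow> 'a) m. \<exists>c. l_ann UNIV (left_ideal_gen g m) = l_ann UNIV {t * c | t. True})"

end

theory Submission
  imports Defs "HOL-Library.List_Lexorder" "HOL-Library.Function_Algebras"
begin

text \<open>
  \<Sigma>-rigidity makes R reduced and forces every \<sigma>_i and \<delta>_i to respect annihilation:
  a b = 0 implies a \<sigma>_i(b) = 0 and a \<delta>_i(b) = 0. Since the d_ij are units, a product
  X^\<alpha> b X^\<beta> equals b' c X^(\<alpha>+\<beta>) modulo terms of lower degree, where c is a unit and b' has
  the same left annihilator in R as b. Comparing top coefficients in the degree-lexicographic
  order then shows that f g = 0 forces a_\<alpha> b_\<beta> = 0 for all coefficients a_\<alpha> of f and b_\<beta> of g.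

  Given g_1, ..., g_m, let C be the finite set of their coefficients. As R is Abelian and right
  p.p., r_R(C) = e R for an idempotent e, the product of the idempotents generating the
  r_R(c), c \<in> C. The coefficient property then gives r_A(g_1 A + ... + g_m A) = r_A((1 - e) A).
\<close>

section \<open>Units, reduced rings and Abelian p.p. rings\<close>

definition reduced :: "'a::ring_1 set \<Rightarrow> bool" where
  "reduced R \<longleftrightarrow> (\<forall>a\<in>R. a * a = 0 \<longrightarrow> a = 0)"

lemma unit_in_mult_cancel:
  assumes "unit_in R c" "y * c = 0"
  shows "y = 0"
proof -
  obtain c' where "c * c' = 1" using assms(1) unfolding unit_in_def by blast
  then have "y = (y * c) * c'" by (simp add: mult.assoc)
  with assms(2) show ?thesis by simp
qed

lemma unit_in_mem: "unit_in R c \<Longrightarrow> c \<in> R"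
  unfolding unit_in_def by blast

locale sub_ring =
  fixes R :: "'a::ring_1 set"
  assumes subring: "subring R"
begin

lemma one_mem [simp]: "1 \<in> R" and zero_mem [simp]: "0 \<in> R"
  using subring unfolding subring_def by blast+

lemma add_mem [simp]: "a \<in> R \<Longrightarrow> b \<in> R \<Longrightarrow> a + b \<in> R"
  and diff_mem [simp]: "a \<in> R \<Longrightarrow> b \<in> R \<Longrightarrow> a - b \<in> R"
  and mult_mem [simp]: "a \<in> R \<Longrightarrow> b \<in> R \<Longrightarrow> a * b \<in> R"
  using subring unfolding subring_def by blast+

lemma uminus_mem [simp]: "a \<in> R \<Longrightarrow> - a \<in> R"
  using diff_mem[of 0 a] by simp

lemma unit_in_one: "unit_in R 1"
  unfolding unit_in_def by simp

lemma unit_in_mult: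
  assumes "unit_in R c" "unit_in R d"
  shows "unit_in R (c * d)"
proof -
  obtain c' d' where inv: "c' \<in> R" "c * c' = 1" "c' * c = 1" "d' \<in> R" "d * d' = 1" "d' * d = 1"
    using assms unfolding unit_in_def by blast
  have "(c * d) * (d' * c') = c * (d * d') * c'" "(d' * c') * (c * d) = d' * (c' * c) * d"
    by (simp_all add: mult.assoc)
  with inv have "c * d * (d' * c') = 1" "d' * c' * (c * d) = 1" by simp_all
  with inv assms show ?thesis
    unfolding unit_in_def by (intro conjI bexI[of _ "d' * c'"]) auto
qed

lemma reduced_mult_eq_0_commute:
  assumes "reduced R" "a \<in> R" "b \<in> R" "a * b = 0"
  shows "b * a = 0"
proof -
  have "(b * a) * (b * a) = b * (a * b) * a" by (simp add: mult.assoc)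
  with assms(4) have "(b * a) * (b * a) = 0" by simp
  with assms(1-3) show ?thesis unfolding reduced_def using mult_mem by blast
qed

lemma right_pp_idempotent:
  assumes "right_pp R" "a \<in> R"
  obtains f where "f \<in> R" "f * f = f" "a * f = 0" "\<And>y. y \<in> R \<Longrightarrow> a * y = 0 \<Longrightarrow> f * y = y"
proof -
  obtain f where f: "f \<in> R" "f * f = f" "r_ann R {a} = {f * r | r. r \<in> R}"
    using assms unfolding right_pp_def by blast
  have "f \<in> {f * r | r. r \<in> R}" by (intro CollectI exI[of _ 1]) simp
  then have "a * f = 0" using f(3) unfolding r_ann_def by blast
  moreover have "f * y = y" if "y \<in> R" "a * y = 0" for y
  proof -
    have "y \<in> r_ann R {a}" using that unfolding r_ann_def by simp
    then obtain r where "y = f * r" using f(3) by auto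
    then show ?thesis using f(2) by (simp add: mult.assoc[symmetric])
  qed
  ultimately show thesis using f(1,2) that by blast
qed

lemma left_pp_idempotent:
  assumes "left_pp R" "a \<in> R"
  obtains f where "f \<in> R" "f * f = f" "f * a = 0" "\<And>y. y \<in> R \<Longrightarrow> y * a = 0 \<Longrightarrow> y * f = y"
proof -
  obtain f where f: "f \<in> R" "f * f = f" "l_ann R {a} = {r * f | r. r \<in> R}"
    using assms unfolding left_pp_def by blast
  have "f \<in> {r * f | r. r \<in> R}" by (intro CollectI exI[of _ 1]) simp
  then have "f * a = 0" using f(3) unfolding l_ann_def by blast
  moreover have "y * f = y" if "y \<in> R" "y * a = 0" for y
  proof -
    have "y \<in> l_ann R {a}" using that unfolding l_ann_def by simp
    then obtain r where "y = r * f" using f(3) by auto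
    then show ?thesis using f(2) by (simp add: mult.assoc)
  qed
  ultimately show thesis using f(1,2) that by blast
qed

lemma abelian_right_pp_r_ann_finite:
  assumes abelian: "abelian_ring R" and pp: "right_pp R" and "finite C" "C \<subseteq> R"
  shows "\<exists>e\<in>R. (\<forall>c\<in>C. c * e = 0) \<and> (\<forall>y\<in>R. (\<forall>c\<in>C. c * y = 0) \<longrightarrow> e * y = y)"
  using \<open>finite C\<close> \<open>C \<subseteq> R\<close>
proof (induction C rule: finite_induct)
  case empty
  show ?case by (intro bexI[of _ 1]) auto
next
  case (insert a C)
  obtain e where e: "e \<in> R" "\<forall>c\<in>C. c * e = 0" "\<forall>y\<in>R. (\<forall>c\<in>C. c * y = 0) \<longrightarrow> e * y = y"
    using insert by auto
  obtain f where f: "f \<in> R" "f * f = f" "a * f = 0" "\<And>y. y \<in> R \<Longrightarrow> a * y = 0 \<Longrightarrow> f * y = y"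
    using right_pp_idempotent[OF pp] insert.prems by blast
  have central: "c * f = f * c" if "c \<in> R" for c
    using abelian f(1,2) that unfolding abelian_ring_def by (metis (no_types))
  show ?case
  proof (intro bexI[of _ "f * e"] conjI ballI impI)
    fix c assume c: "c \<in> insert a C"
    show "c * (f * e) = 0"
    proof (cases "c = a")
      case True
      then show ?thesis using f(3) by (simp add: mult.assoc[symmetric])
    next
      case False
      with c insert.prems have "c \<in> C" "c \<in> R" by auto
      then have "c * (f * e) = f * (c * e)" by (simp add: central mult.assoc[symmetric])
      with \<open>c \<in> C\<close> e(2) show ?thesis by simp
    qed
  next
    fix y assume "y \<in> R" "\<forall>c\<in>insert a C. c * y = 0"
    with e(3) f(4) show "f * e * y = y" by (simp add: mult.assoc)
  qed (use e f in simp)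
qed

lemma abelian_left_pp_l_ann_finite:
  assumes abelian: "abelian_ring R" and pp: "left_pp R" and "finite C" "C \<subseteq> R"
  shows "\<exists>e\<in>R. (\<forall>c\<in>C. e * c = 0) \<and> (\<forall>y\<in>R. (\<forall>c\<in>C. y * c = 0) \<longrightarrow> y * e = y)"
  using \<open>finite C\<close> \<open>C \<subseteq> R\<close>
proof (induction C rule: finite_induct)
  case empty
  show ?case by (intro bexI[of _ 1]) auto
next
  case (insert a C)
  obtain e where e: "e \<in> R" "\<forall>c\<in>C. e * c = 0" "\<forall>y\<in>R. (\<forall>c\<in>C. y * c = 0) \<longrightarrow> y * e = y"
    using insert by auto
  obtain f where f: "f \<in> R" "f * f = f" "f * a = 0" "\<And>y. y \<in> R \<Longrightarrow> y * a = 0 \<Longrightarrow> y * f = y"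
    using left_pp_idempotent[OF pp] insert.prems by blast
  have central: "f * c = c * f" if "c \<in> R" for c
    using abelian f(1,2) that unfolding abelian_ring_def by (metis (no_types))
  show ?case
  proof (intro bexI[of _ "e * f"] conjI ballI impI)
    fix c assume c: "c \<in> insert a C"
    show "e * f * c = 0"
    proof (cases "c = a")
      case True
      then show ?thesis using f(3) by (simp add: mult.assoc)
    next
      case False
      with c insert.prems have "c \<in> C" "c \<in> R" by auto
      then have "e * f * c = e * c * f" by (simp add: central mult.assoc)
      with \<open>c \<in> C\<close> e(2) show ?thesis by simp
    qed
  next
    fix y assume "y \<in> R" "\<forall>c\<in>insert a C. y * c = 0"
    with e(3) f(4) show "y * (e * f) = y" by (simp add: mult.assoc[symmetric])
  qed (use e f in simp)
qed

end

section \<open>Annihilators of finitely generated one-sided ideals\<close>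

lemma r_ann_right_ideal_gen_iff:
  "h \<in> r_ann UNIV (right_ideal_gen g m) \<longleftrightarrow> (\<forall>k<m. \<forall>t. g k * (t * h) = 0)"
proof
  assume h: "h \<in> r_ann UNIV (right_ideal_gen g m)"
  show "\<forall>k<m. \<forall>t. g k * (t * h) = 0"
  proof (intro allI impI)
    fix k t assume "k < m"
    have "(\<Sum>j<m. g j * (if j = k then t else 0)) = (\<Sum>j<m. if j = k then g k * t else 0)"
      by (rule sum.cong) auto
    with \<open>k < m\<close> have "g k * t \<in> right_ideal_gen g m"
      unfolding right_ideal_gen_def mem_Collect_eq by (intro exI[of _ "\<lambda>j. if j = k then t else 0"]) simp
    then have "(g k * t) * h = 0" using h unfolding r_ann_def by blast
    then show "g k * (t * h) = 0" by (simp add: mult.assoc)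
  qed
next
  assume gen: "\<forall>k<m. \<forall>t. g k * (t * h) = 0"
  have "(\<Sum>k<m. g k * t k) * h = 0" for t
  proof -
    have "(\<Sum>k<m. g k * t k) * h = (\<Sum>k<m. g k * (t k * h))"
      by (simp add: sum_distrib_right mult.assoc)
    also have "\<dots> = 0" using gen by simp
    finally show ?thesis .
  qed
  then show "h \<in> r_ann UNIV (right_ideal_gen g m)"
    unfolding r_ann_def right_ideal_gen_def by blast
qed

lemma l_ann_left_ideal_gen_iff:
  "h \<in> l_ann UNIV (left_ideal_gen g m) \<longleftrightarrow> (\<forall>k<m. \<forall>t. (h * t) * g k = 0)"
proof
  assume h: "h \<in> l_ann UNIV (left_ideal_gen g m)"
  show "\<forall>k<m. \<forall>t. (h * t) * g k = 0"
  proof (intro allI impI)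
    fix k t assume "k < m"
    have "(\<Sum>j<m. (if j = k then t else 0) * g j) = (\<Sum>j<m. if j = k then t * g k else 0)"
      by (rule sum.cong) auto
    with \<open>k < m\<close> have "t * g k \<in> left_ideal_gen g m"
      unfolding left_ideal_gen_def mem_Collect_eq by (intro exI[of _ "\<lambda>j. if j = k then t else 0"]) simp
    then have "h * (t * g k) = 0" using h unfolding l_ann_def by blast
    then show "(h * t) * g k = 0" by (simp add: mult.assoc)
  qed
next
  assume gen: "\<forall>k<m. \<forall>t. (h * t) * g k = 0"
  have "h * (\<Sum>k<m. t k * g k) = 0" for t
  proof -
    have "h * (\<Sum>k<m. t k * g k) = (\<Sum>k<m. (h * t k) * g k)"
      by (simp add: sum_distrib_left mult.assoc)
    also have "\<dots> = 0" using gen by simp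
    finally show ?thesis .
  qed
  then show "h \<in> l_ann UNIV (left_ideal_gen g m)"
    unfolding l_ann_def left_ideal_gen_def by blast
qed

lemma r_ann_right_ideal_gen_eq:
  fixes g :: "nat \<Rightarrow> 'a::ring_1"
  assumes ann: "\<And>k. k < m \<Longrightarrow> g k * e = 0"
    and fix_ann: "\<And>h. (\<And>k. k < m \<Longrightarrow> g k * h = 0) \<Longrightarrow> e * h = h"
  shows "r_ann UNIV (right_ideal_gen g m) = r_ann UNIV {(1 - e) * t | t. True}"
proof -
  have principal: "h \<in> r_ann UNIV {(1 - e) * t | t. True} \<longleftrightarrow> (\<forall>t. e * (t * h) = t * h)" for h
  proof -
    have "h \<in> r_ann UNIV {(1 - e) * t | t. True} \<longleftrightarrow> (\<forall>t. (1 - e) * t * h = 0)"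
      unfolding r_ann_def by blast
    moreover have "(1 - e) * t * h = 0 \<longleftrightarrow> e * (t * h) = t * h" for t
      by (auto simp: left_diff_distrib mult.assoc)
    ultimately show ?thesis by simp
  qed
  have generated: "(\<forall>k<m. \<forall>t. g k * (t * h) = 0) \<longleftrightarrow> (\<forall>t. e * (t * h) = t * h)" for h
  proof
    assume "\<forall>k<m. \<forall>t. g k * (t * h) = 0"
    then show "\<forall>t. e * (t * h) = t * h" using fix_ann by blast
  next
    assume fixed: "\<forall>t. e * (t * h) = t * h"
    have "g k * (t * h) = (g k * e) * (t * h)" for k t
      using fixed by (simp add: mult.assoc)
    then show "\<forall>k<m. \<forall>t. g k * (t * h) = 0" using ann by simp
  qed
  show ?thesis
    unfolding set_eq_iff r_ann_right_ideal_gen_iff principal generated by simp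
qed

lemma l_ann_left_ideal_gen_eq:
  fixes g :: "nat \<Rightarrow> 'a::ring_1"
  assumes ann: "\<And>k. k < m \<Longrightarrow> e * g k = 0"
    and fix_ann: "\<And>h. (\<And>k. k < m \<Longrightarrow> h * g k = 0) \<Longrightarrow> h * e = h"
  shows "l_ann UNIV (left_ideal_gen g m) = l_ann UNIV {t * (1 - e) | t. True}"
proof -
  have principal: "h \<in> l_ann UNIV {t * (1 - e) | t. True} \<longleftrightarrow> (\<forall>t. (h * t) * e = h * t)" for h
  proof -
    have "h \<in> l_ann UNIV {t * (1 - e) | t. True} \<longleftrightarrow> (\<forall>t. h * (t * (1 - e)) = 0)"
      unfolding l_ann_def by blast
    moreover have "h * (t * (1 - e)) = 0 \<longleftrightarrow> (h * t) * e = h * t" for t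
    proof -
      have "h * (t * (1 - e)) = h * t - h * t * e" by (simp add: right_diff_distrib mult.assoc)
      then show ?thesis by auto
    qed
    ultimately show ?thesis by simp
  qed
  have generated: "(\<forall>k<m. \<forall>t. (h * t) * g k = 0) \<longleftrightarrow> (\<forall>t. (h * t) * e = h * t)" for h
  proof
    assume "\<forall>k<m. \<forall>t. (h * t) * g k = 0"
    then show "\<forall>t. (h * t) * e = h * t" using fix_ann by blast
  next
    assume fixed: "\<forall>t. (h * t) * e = h * t"
    have "(h * t) * g k = (h * t) * (e * g k)" for k t
      using fixed by (simp add: mult.assoc[symmetric])
    then show "\<forall>k<m. \<forall>t. (h * t) * g k = 0" using ann by simp
  qed
  show ?thesis
    unfolding set_eq_iff l_ann_left_ideal_gen_iff principal generated by simp
qed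

section \<open>The degree-lexicographic order on exponents\<close>

definition deg :: "nat \<Rightarrow> (nat \<Rightarrow> nat) \<Rightarrow> nat" where
  "deg n \<alpha> = (\<Sum>t<n. \<alpha> t)"

definition mono_key :: "nat \<Rightarrow> (nat \<Rightarrow> nat) \<Rightarrow> nat list" where
  "mono_key n \<alpha> = deg n \<alpha> # map \<alpha> [0..<n]"

definition mono_less :: "nat \<Rightarrow> (nat \<Rightarrow> nat) \<Rightarrow> (nat \<Rightarrow> nat) \<Rightarrow> bool" where
  "mono_less n \<alpha> \<beta> \<longleftrightarrow> mono_key n \<alpha> < mono_key n \<beta>"

lemma mono_less_irrefl: "\<not> mono_less n \<alpha> \<alpha>"
  unfolding mono_less_def by simp

lemma mono_less_trans: "mono_less n \<alpha> \<beta> \<Longrightarrow> mono_less n \<beta> \<gamma> \<Longrightarrow> mono_less n \<alpha> \<gamma>"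
  unfolding mono_less_def by (rule less_trans)

lemma mono_less_deg: "mono_less n \<alpha> \<beta> \<Longrightarrow> deg n \<alpha> \<le> deg n \<beta>"
  unfolding mono_less_def mono_key_def by auto

lemma inj_on_mono_key: "inj_on (mono_key n) (exps n)"
proof (rule inj_onI)
  fix \<alpha> \<beta> assume exps: "\<alpha> \<in> exps n" "\<beta> \<in> exps n" and "mono_key n \<alpha> = mono_key n \<beta>"
  then have "map \<alpha> [0..<n] = map \<beta> [0..<n]" unfolding mono_key_def by simp
  then have "\<alpha> t = \<beta> t" if "t < n" for t using that by (simp add: map_eq_conv)
  moreover have "\<alpha> t = \<beta> t" if "\<not> t < n" for t using that exps unfolding exps_def by simp
  ultimately show "\<alpha> = \<beta>" by blast
qed

lemma mono_less_linear:
  "\<alpha> \<in> exps n \<Longrightarrow> \<beta> \<in> exps n \<Longrightarrow> \<alpha> \<noteq> \<beta> \<Longrightarrow> mono_less n \<alpha> \<beta> \<or> mono_less n \<beta> \<alpha>"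
proof -
  assume "\<alpha> \<in> exps n" "\<beta> \<in> exps n" "\<alpha> \<noteq> \<beta>"
  then have "mono_key n \<alpha> \<noteq> mono_key n \<beta>" using inj_on_mono_key unfolding inj_on_def by blast
  then show ?thesis unfolding mono_less_def by (simp add: neq_iff)
qed

lemma deg_add: "deg n (\<alpha> + \<beta>) = deg n \<alpha> + deg n \<beta>"
  unfolding deg_def by (simp add: sum.distrib)

lemma map_add_left_less: "map \<alpha> xs < map \<beta> xs \<Longrightarrow> map (\<gamma> + \<alpha>) xs < map (\<gamma> + \<beta>) xs"
  for \<alpha> \<beta> \<gamma> :: "nat \<Rightarrow> nat"
  by (induction xs) auto

lemma mono_less_add_left: "mono_less n \<alpha> \<beta> \<Longrightarrow> mono_less n (\<gamma> + \<alpha>) (\<gamma> + \<beta>)"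
  unfolding mono_less_def mono_key_def deg_add by (auto intro: map_add_left_less)

lemma mono_less_add_right: "mono_less n \<alpha> \<beta> \<Longrightarrow> mono_less n (\<alpha> + \<gamma>) (\<beta> + \<gamma>)"
  using mono_less_add_left[of n \<alpha> \<beta> \<gamma>] by (simp add: add.commute)

lemma mono_less_add_strict:
  assumes "\<alpha> = \<alpha>' \<or> mono_less n \<alpha> \<alpha>'" "\<beta> = \<beta>' \<or> mono_less n \<beta> \<beta>'" "\<alpha> \<noteq> \<alpha>' \<or> \<beta> \<noteq> \<beta>'"
  shows "mono_less n (\<alpha> + \<beta>) (\<alpha>' + \<beta>')"
  using assms(1)
proof
  assume "\<alpha> = \<alpha>'"
  with assms(2,3) show ?thesis by (auto intro: mono_less_add_left)
next
  assume "mono_less n \<alpha> \<alpha>'"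
  then have "mono_less n (\<alpha> + \<beta>) (\<alpha>' + \<beta>)" by (rule mono_less_add_right)
  with assms(2) show ?thesis by (auto intro: mono_less_trans mono_less_add_left)
qed

lemma exists_mono_less_max:
  assumes "finite S" "S \<noteq> {}" "S \<subseteq> exps n"
  shows "\<exists>\<mu>\<in>S. \<forall>\<alpha>\<in>S. \<alpha> \<noteq> \<mu> \<longrightarrow> mono_less n \<alpha> \<mu>"
proof -
  have "Max (mono_key n ` S) \<in> mono_key n ` S" using assms(1,2) by simp
  then obtain \<mu> where \<mu>: "Max (mono_key n ` S) = mono_key n \<mu>" "\<mu> \<in> S" by (rule imageE)
  have "mono_less n \<alpha> \<mu>" if "\<alpha> \<in> S" "\<alpha> \<noteq> \<mu>" for \<alpha>
  proof -
    have "mono_key n \<alpha> \<noteq> mono_key n \<mu>"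
      using that \<mu>(2) assms(3) inj_on_mono_key unfolding inj_on_def by blast
    moreover have "mono_key n \<alpha> \<le> mono_key n \<mu>"
      using Max_ge[of "mono_key n ` S" "mono_key n \<alpha>"] that(1) \<mu>(1) assms(1) by simp
    ultimately show ?thesis unfolding mono_less_def by simp
  qed
  with \<mu>(2) show ?thesis by blast
qed

lemma exps_add: "\<alpha> \<in> exps n \<Longrightarrow> \<beta> \<in> exps n \<Longrightarrow> \<alpha> + \<beta> \<in> exps n"
  unfolding exps_def by simp

lemma exps_upd: "\<alpha> \<in> exps n \<Longrightarrow> i < n \<Longrightarrow> \<alpha>(i := k) \<in> exps n"
  unfolding exps_def by simp

lemma deg_upd_Suc: "i < n \<Longrightarrow> deg n (\<alpha>(i := Suc (\<alpha> i))) = Suc (deg n \<alpha>)"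
proof -
  assume "i < n"
  have "\<alpha>(i := Suc (\<alpha> i)) = \<alpha> + (\<lambda>t. if t = i then 1 else 0)" by auto
  with \<open>i < n\<close> show ?thesis unfolding deg_def by (simp add: sum.distrib)
qed

lemma deg_eq_0:
  assumes "\<alpha> \<in> exps n" "deg n \<alpha> = 0"
  shows "\<alpha> = 0"
proof
  fix t
  show "\<alpha> t = 0 t"
  proof (cases "t < n")
    case True
    with assms(2) show ?thesis unfolding deg_def by simp
  next
    case False
    with assms(1) show ?thesis unfolding exps_def by simp
  qed
qed

section \<open>Coordinates with respect to the PBW basis\<close>

locale PBW_basis =
  fixes R :: "'a::ring_1 set" and x :: "nat \<Rightarrow> 'a" and n :: nat
  assumes skew_PBW: "skew_PBW R x n"
begin

sublocale sub_ring R
  using skew_PBW unfolding skew_PBW_def by unfold_locales blast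

abbreviation X :: "(nat \<Rightarrow> nat) \<Rightarrow> 'a" where
  "X \<equiv> mono x n"

lemma spanning:
  obtains S c where "finite S" "S \<subseteq> exps n" "\<forall>\<alpha>\<in>S. c \<alpha> \<in> R" "h = (\<Sum>\<alpha>\<in>S. c \<alpha> * X \<alpha>)"
proof -
  have "\<exists>S c. finite S \<and> S \<subseteq> exps n \<and> (\<forall>\<alpha>\<in>S. c \<alpha> \<in> R) \<and> h = (\<Sum>\<alpha>\<in>S. c \<alpha> * X \<alpha>)"
    using skew_PBW unfolding skew_PBW_def by blast
  then show thesis by (elim exE conjE) (rule that)
qed

lemma free:
  "finite S \<Longrightarrow> S \<subseteq> exps n \<Longrightarrow> (\<forall>\<alpha>\<in>S. c \<alpha> \<in> R) \<Longrightarrow> (\<Sum>\<alpha>\<in>S. c \<alpha> * X \<alpha>) = 0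
    \<Longrightarrow> \<alpha> \<in> S \<Longrightarrow> c \<alpha> = 0"
  using skew_PBW unfolding skew_PBW_def by blast

definition supp :: "((nat \<Rightarrow> nat) \<Rightarrow> 'a) \<Rightarrow> (nat \<Rightarrow> nat) set" where
  "supp c = {\<gamma>. c \<gamma> \<noteq> 0}"

definition is_coeffs :: "((nat \<Rightarrow> nat) \<Rightarrow> 'a) \<Rightarrow> bool" where
  "is_coeffs c \<longleftrightarrow> finite (supp c) \<and> supp c \<subseteq> exps n \<and> (\<forall>\<gamma>. c \<gamma> \<in> R)"

definition coef :: "'a \<Rightarrow> (nat \<Rightarrow> nat) \<Rightarrow> 'a" where
  "coef h = (THE c. is_coeffs c \<and> h = (\<Sum>\<gamma>\<in>supp c. c \<gamma> * X \<gamma>))"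

lemma sum_supp_eq:
  "finite T \<Longrightarrow> supp c \<subseteq> T \<Longrightarrow> (\<Sum>\<gamma>\<in>supp c. c \<gamma> * X \<gamma>) = (\<Sum>\<gamma>\<in>T. c \<gamma> * X \<gamma>)"
  by (rule sum.mono_neutral_left) (auto simp: supp_def)

lemma is_coeffs_restrict:
  assumes "finite T" "T \<subseteq> exps n" "\<And>\<gamma>. \<gamma> \<in> T \<Longrightarrow> c \<gamma> \<in> R"
  shows "is_coeffs (\<lambda>\<gamma>. if \<gamma> \<in> T then c \<gamma> else 0)"
    and "(\<Sum>\<gamma>\<in>supp (\<lambda>\<gamma>. if \<gamma> \<in> T then c \<gamma> else 0). (if \<gamma> \<in> T then c \<gamma> else 0) * X \<gamma>)
      = (\<Sum>\<gamma>\<in>T. c \<gamma> * X \<gamma>)"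
proof -
  have supp: "supp (\<lambda>\<gamma>. if \<gamma> \<in> T then c \<gamma> else 0) \<subseteq> T" unfolding supp_def by auto
  with assms show "is_coeffs (\<lambda>\<gamma>. if \<gamma> \<in> T then c \<gamma> else 0)"
    unfolding is_coeffs_def by (auto intro: finite_subset)
  show "(\<Sum>\<gamma>\<in>supp (\<lambda>\<gamma>. if \<gamma> \<in> T then c \<gamma> else 0). (if \<gamma> \<in> T then c \<gamma> else 0) * X \<gamma>)
      = (\<Sum>\<gamma>\<in>T. c \<gamma> * X \<gamma>)"
    using sum_supp_eq[OF assms(1) supp] by simp
qed

lemma is_coeffs_unique:
  assumes "is_coeffs c" "is_coeffs d" "(\<Sum>\<gamma>\<in>supp c. c \<gamma> * X \<gamma>) = (\<Sum>\<gamma>\<in>supp d. d \<gamma> * X \<gamma>)"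
  shows "c = d"
proof
  fix \<gamma>
  let ?T = "supp c \<union> supp d"
  have T: "finite ?T" "?T \<subseteq> exps n" using assms(1,2) unfolding is_coeffs_def by auto
  have "(\<Sum>\<gamma>\<in>?T. (c \<gamma> - d \<gamma>) * X \<gamma>) = 0"
    using assms(3) sum_supp_eq[OF T(1), of c] sum_supp_eq[OF T(1), of d]
    by (simp add: left_diff_distrib sum_subtractf)
  moreover have "\<forall>\<gamma>\<in>?T. c \<gamma> - d \<gamma> \<in> R" using assms(1,2) unfolding is_coeffs_def by auto
  ultimately have "\<gamma> \<in> ?T \<Longrightarrow> c \<gamma> - d \<gamma> = 0"
    using free[OF T, of "\<lambda>\<gamma>. c \<gamma> - d \<gamma>"] by blast
  then show "c \<gamma> = d \<gamma>" by (cases "\<gamma> \<in> ?T") (auto simp: supp_def)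
qed

lemma coef_is_coeffs: "is_coeffs (coef h)" and coef_expand: "h = (\<Sum>\<gamma>\<in>supp (coef h). coef h \<gamma> * X \<gamma>)"
proof -
  obtain S c where S: "finite S" "S \<subseteq> exps n" "\<forall>\<alpha>\<in>S. c \<alpha> \<in> R" "h = (\<Sum>\<alpha>\<in>S. c \<alpha> * X \<alpha>)"
    by (rule spanning)
  define c' where "c' = (\<lambda>\<gamma>. if \<gamma> \<in> S then c \<gamma> else 0)"
  have c': "is_coeffs c'" "h = (\<Sum>\<gamma>\<in>supp c'. c' \<gamma> * X \<gamma>)"
    using is_coeffs_restrict[OF S(1,2) S(3)[rule_format]] S(4) unfolding c'_def by simp_all
  have "\<exists>!c. is_coeffs c \<and> h = (\<Sum>\<gamma>\<in>supp c. c \<gamma> * X \<gamma>)"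
  proof (rule ex1I)
    show "is_coeffs c' \<and> h = (\<Sum>\<gamma>\<in>supp c'. c' \<gamma> * X \<gamma>)" using c' by blast
  next
    fix d assume "is_coeffs d \<and> h = (\<Sum>\<gamma>\<in>supp d. d \<gamma> * X \<gamma>)"
    then have d: "is_coeffs d" "(\<Sum>\<gamma>\<in>supp d. d \<gamma> * X \<gamma>) = (\<Sum>\<gamma>\<in>supp c'. c' \<gamma> * X \<gamma>)"
      using c'(2) by auto
    show "d = c'" by (rule is_coeffs_unique[OF d(1) c'(1) d(2)])
  qed
  then have "is_coeffs (coef h) \<and> h = (\<Sum>\<gamma>\<in>supp (coef h). coef h \<gamma> * X \<gamma>)"
    unfolding coef_def by (rule theI')
  then show "is_coeffs (coef h)" "h = (\<Sum>\<gamma>\<in>supp (coef h). coef h \<gamma> * X \<gamma>)" by blast+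
qed

lemma coef_mem [simp]: "coef h \<gamma> \<in> R"
  and finite_supp_coef [simp]: "finite (supp (coef h))"
  and supp_coef_exps: "supp (coef h) \<subseteq> exps n"
  using coef_is_coeffs unfolding is_coeffs_def by blast+

lemma coef_eqI:
  assumes "finite T" "T \<subseteq> exps n" "\<And>\<gamma>. \<gamma> \<in> T \<Longrightarrow> c \<gamma> \<in> R"
  shows "coef (\<Sum>\<gamma>\<in>T. c \<gamma> * X \<gamma>) = (\<lambda>\<gamma>. if \<gamma> \<in> T then c \<gamma> else 0)"
proof (rule is_coeffs_unique[OF coef_is_coeffs is_coeffs_restrict(1)[OF assms]])
  let ?s = "\<Sum>\<gamma>\<in>T. c \<gamma> * X \<gamma>"
  have "(\<Sum>\<gamma>\<in>supp (coef ?s). coef ?s \<gamma> * X \<gamma>) = ?s" by (rule coef_expand[symmetric])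
  also have "\<dots> = (\<Sum>\<gamma>\<in>supp (\<lambda>\<gamma>. if \<gamma> \<in> T then c \<gamma> else 0). (if \<gamma> \<in> T then c \<gamma> else 0) * X \<gamma>)"
    by (rule is_coeffs_restrict(2)[OF assms, symmetric])
  finally show "(\<Sum>\<gamma>\<in>supp (coef ?s). coef ?s \<gamma> * X \<gamma>)
    = (\<Sum>\<gamma>\<in>supp (\<lambda>\<gamma>. if \<gamma> \<in> T then c \<gamma> else 0). (if \<gamma> \<in> T then c \<gamma> else 0) * X \<gamma>)" .
qed

lemma coef_inject: "(\<And>\<gamma>. coef h \<gamma> = coef k \<gamma>) \<Longrightarrow> h = k"
proof -
  assume "\<And>\<gamma>. coef h \<gamma> = coef k \<gamma>"
  then have "coef h = coef k" by (rule ext)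
  then show "h = k" using coef_expand[of h] coef_expand[of k] by simp
qed

lemma coef_expand_superset: "finite T \<Longrightarrow> supp (coef h) \<subseteq> T \<Longrightarrow> h = (\<Sum>\<gamma>\<in>T. coef h \<gamma> * X \<gamma>)"
  using coef_expand[of h] sum_supp_eq[of T "coef h"] by simp

lemma coef_add: "coef (h + k) \<gamma> = coef h \<gamma> + coef k \<gamma>"
proof -
  let ?T = "supp (coef h) \<union> supp (coef k)"
  have T: "finite ?T" "?T \<subseteq> exps n" using supp_coef_exps by auto
  have "h = (\<Sum>\<gamma>\<in>?T. coef h \<gamma> * X \<gamma>)" "k = (\<Sum>\<gamma>\<in>?T. coef k \<gamma> * X \<gamma>)"
    by (rule coef_expand_superset[OF T(1)], blast)+
  then have "h + k = (\<Sum>\<gamma>\<in>?T. coef h \<gamma> * X \<gamma>) + (\<Sum>\<gamma>\<in>?T. coef k \<gamma> * X \<gamma>)"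
    by simp
  also have "\<dots> = (\<Sum>\<gamma>\<in>?T. (coef h \<gamma> + coef k \<gamma>) * X \<gamma>)"
    by (simp add: distrib_right sum.distrib)
  finally show ?thesis
    using coef_eqI[OF T] by (auto simp: supp_def)
qed

lemma coef_lmult:
  assumes r: "r \<in> R"
  shows "coef (r * h) \<gamma> = r * coef h \<gamma>"
proof -
  have "r * h = (\<Sum>\<gamma>\<in>supp (coef h). (r * coef h \<gamma>) * X \<gamma>)"
    by (subst coef_expand) (simp add: sum_distrib_left mult.assoc)
  moreover have "coef (\<Sum>\<gamma>\<in>supp (coef h). (r * coef h \<gamma>) * X \<gamma>)
      = (\<lambda>\<gamma>. if \<gamma> \<in> supp (coef h) then r * coef h \<gamma> else 0)"
    by (rule coef_eqI) (use r supp_coef_exps in auto)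
  ultimately show ?thesis by (simp add: supp_def)
qed

lemma coef_0 [simp]: "coef 0 \<gamma> = 0"
  using coef_lmult[of 0 0] by simp

lemma coef_diff: "coef (h - k) \<gamma> = coef h \<gamma> - coef k \<gamma>"
  using coef_add[of h "- k"] coef_lmult[of "- 1" k] by simp

lemma coef_sum: "coef (\<Sum>i\<in>I. h i) \<gamma> = (\<Sum>i\<in>I. coef (h i) \<gamma>)"
  by (induction I rule: infinite_finite_induct) (auto simp: coef_add)

lemma coef_mono: "\<alpha> \<in> exps n \<Longrightarrow> r \<in> R \<Longrightarrow> coef (r * X \<alpha>) \<gamma> = (if \<gamma> = \<alpha> then r else 0)"
  using coef_eqI[of "{\<alpha>}" "\<lambda>_. r"] by auto

lemma finite_range_coef: "finite (range (coef h))"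
proof -
  have "range (coef h) \<subseteq> insert 0 (coef h ` supp (coef h))"
    unfolding supp_def by auto
  then show ?thesis by (rule finite_subset) simp
qed

lemma mono_zero: "X 0 = 1"
proof -
  have "foldr (\<lambda>i m. x i ^ (0::nat) * m) xs 1 = 1" for xs
    by (induction xs) auto
  then show ?thesis unfolding mono_def zero_fun_def .
qed

lemma x_mult_mono:
  assumes j: "j < n" and below: "\<And>t. t < j \<Longrightarrow> \<mu> t = 0"
  shows "x j * X \<mu> = X (\<mu>(j := Suc (\<mu> j)))"
proof -
  have split: "[0..<n] = [0..<j] @ j # [Suc j..<n]"
    using j upt_add_eq_append[of 0 j "n - j"] upt_conv_Cons[of j n] by simp
  have skip: "foldr (\<lambda>i m. x i ^ \<nu> i * m) xs z = z" if "\<forall>t\<in>set xs. \<nu> t = 0" for \<nu> xs z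
    using that by (induction xs) auto
  have "X \<nu> = x j ^ \<nu> j * foldr (\<lambda>i m. x i ^ \<nu> i * m) [Suc j..<n] 1"
    if "\<And>t. t < j \<Longrightarrow> \<nu> t = 0" for \<nu>
    unfolding mono_def split foldr_append using skip that by simp
  moreover have "foldr (\<lambda>i m. x i ^ (\<mu>(j := Suc (\<mu> j))) i * m) [Suc j..<n] 1
      = foldr (\<lambda>i m. x i ^ \<mu> i * m) [Suc j..<n] 1"
    by (rule foldr_cong) auto
  ultimately show ?thesis
    using below by (simp add: mult.assoc)
qed

lemma mono_eq_x_mult:
  assumes "j < n" "\<alpha> j \<noteq> 0" "\<And>t. t < j \<Longrightarrow> \<alpha> t = 0"
  shows "X \<alpha> = x j * X (\<alpha>(j := \<alpha> j - 1))"
  using x_mult_mono[of j "\<alpha>(j := \<alpha> j - 1)"] assms by simp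

lemma mono_first_factor:
  assumes \<alpha>: "\<alpha> \<in> exps n" and deg: "deg n \<alpha> = Suc k"
  obtains j \<alpha>' where "j < n" "\<alpha>' \<in> exps n" "deg n \<alpha>' = k" "\<alpha> = \<alpha>'(j := Suc (\<alpha>' j))" "X \<alpha> = x j * X \<alpha>'"
proof -
  have "\<exists>t. \<alpha> t \<noteq> 0"
  proof (rule ccontr)
    assume "\<not> (\<exists>t. \<alpha> t \<noteq> 0)"
    with deg show False unfolding deg_def by simp
  qed
  define j where "j = (LEAST t. \<alpha> t \<noteq> 0)"
  have \<alpha>j: "\<alpha> j \<noteq> 0" unfolding j_def by (rule LeastI_ex) fact
  have below: "\<alpha> t = 0" if "t < j" for t
    using not_less_Least[of t "\<lambda>t. \<alpha> t \<noteq> 0"] that unfolding j_def by blast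
  have j: "j < n"
  proof (rule ccontr)
    assume "\<not> j < n"
    with \<alpha> \<alpha>j show False unfolding exps_def by simp
  qed
  define \<alpha>' where "\<alpha>' = \<alpha>(j := \<alpha> j - 1)"
  have \<alpha>\<alpha>': "\<alpha> = \<alpha>'(j := Suc (\<alpha>' j))" unfolding \<alpha>'_def using \<alpha>j by auto
  show ?thesis
  proof
    show "\<alpha>' \<in> exps n" unfolding \<alpha>'_def using \<alpha> j by (rule exps_upd)
    show "deg n \<alpha>' = k" using deg_upd_Suc[OF j, of \<alpha>'] \<alpha>\<alpha>' deg by simp
    show "X \<alpha> = x j * X \<alpha>'" unfolding \<alpha>'_def using mono_eq_x_mult[of j \<alpha>, OF j \<alpha>j below] .
  qed fact+
qed

definition deg_less :: "nat \<Rightarrow> 'a set" where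
  "deg_less m = {h. \<forall>\<gamma>. m \<le> deg n \<gamma> \<longrightarrow> coef h \<gamma> = 0}"

lemma deg_less_add: "h \<in> deg_less m \<Longrightarrow> k \<in> deg_less m \<Longrightarrow> h + k \<in> deg_less m"
  unfolding deg_less_def by (simp add: coef_add)

lemma deg_less_zero: "0 \<in> deg_less m"
  unfolding deg_less_def by simp

lemma deg_less_lmult: "r \<in> R \<Longrightarrow> h \<in> deg_less m \<Longrightarrow> r * h \<in> deg_less m"
  unfolding deg_less_def by (simp add: coef_lmult)

lemma deg_less_mono: "h \<in> deg_less m \<Longrightarrow> m \<le> m' \<Longrightarrow> h \<in> deg_less m'"
  unfolding deg_less_def by auto

lemma deg_less_monomial: "\<gamma> \<in> exps n \<Longrightarrow> r \<in> R \<Longrightarrow> deg n \<gamma> < m \<Longrightarrow> r * X \<gamma> \<in> deg_less m"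
  unfolding deg_less_def by (auto simp: coef_mono)

lemma deg_less_sum: "(\<And>i. i \<in> I \<Longrightarrow> h i \<in> deg_less m) \<Longrightarrow> (\<Sum>i\<in>I. h i) \<in> deg_less m"
  by (induction I rule: infinite_finite_induct) (auto simp: deg_less_zero deg_less_add)

lemma deg_less_supp: "h \<in> deg_less m \<Longrightarrow> \<gamma> \<in> supp (coef h) \<Longrightarrow> deg n \<gamma> < m"
  unfolding deg_less_def supp_def using not_less by blast

lemma scalar_mult_eq_0I: "e \<in> R \<Longrightarrow> (\<And>\<alpha>. e * coef f \<alpha> = 0) \<Longrightarrow> e * f = 0"
  by (rule coef_inject) (simp add: coef_lmult)

lemma scalar_mult_eq_selfI: "e \<in> R \<Longrightarrow> (\<And>\<alpha>. e * coef f \<alpha> = coef f \<alpha>) \<Longrightarrow> e * f = f"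
  by (rule coef_inject) (simp add: coef_lmult)

lemma coef_mult:
  "coef (f * g) \<delta> = (\<Sum>\<alpha>\<in>supp (coef f). \<Sum>\<beta>\<in>supp (coef g). coef f \<alpha> * coef (X \<alpha> * (coef g \<beta> * X \<beta>)) \<delta>)"
proof -
  have "f * g = (\<Sum>\<alpha>\<in>supp (coef f). coef f \<alpha> * X \<alpha>) * (\<Sum>\<beta>\<in>supp (coef g). coef g \<beta> * X \<beta>)"
    using coef_expand[of f] coef_expand[of g] by simp
  also have "\<dots> = (\<Sum>\<alpha>\<in>supp (coef f). \<Sum>\<beta>\<in>supp (coef g). coef f \<alpha> * (X \<alpha> * (coef g \<beta> * X \<beta>)))"
    by (simp add: sum_product mult.assoc)
  finally show ?thesis by (simp add: coef_sum coef_lmult)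
qed

end

section \<open>Leading terms in skew PBW extensions\<close>

locale skew_PBW_ext = PBW_basis R x n
  for R :: "'a::ring_1 set" and x n +
  fixes \<sigma> \<delta> :: "nat \<Rightarrow> 'a \<Rightarrow> 'a"
  assumes maps: "skew_PBW_maps R x n \<sigma> \<delta>"
    and bijective: "bijective_skew_PBW R x n \<sigma>"
begin

lemma sigma_mem [simp]: "i < n \<Longrightarrow> r \<in> R \<Longrightarrow> \<sigma> i r \<in> R"
  and delta_mem [simp]: "i < n \<Longrightarrow> r \<in> R \<Longrightarrow> \<delta> i r \<in> R"
  and x_mult: "i < n \<Longrightarrow> r \<in> R \<Longrightarrow> x i * r = \<sigma> i r * x i + \<delta> i r"
  and sigma_one: "i < n \<Longrightarrow> \<sigma> i 1 = 1"
  and sigma_add: "i < n \<Longrightarrow> a \<in> R \<Longrightarrow> b \<in> R \<Longrightarrow> \<sigma> i (a + b) = \<sigma> i a + \<sigma> i b"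
  and delta_add: "i < n \<Longrightarrow> a \<in> R \<Longrightarrow> b \<in> R \<Longrightarrow> \<delta> i (a + b) = \<delta> i a + \<delta> i b"
  and sigma_mult: "i < n \<Longrightarrow> a \<in> R \<Longrightarrow> b \<in> R \<Longrightarrow> \<sigma> i (a * b) = \<sigma> i a * \<sigma> i b"
  and delta_mult: "i < n \<Longrightarrow> a \<in> R \<Longrightarrow> b \<in> R \<Longrightarrow> \<delta> i (a * b) = \<sigma> i a * \<delta> i b + \<delta> i a * b"
  using maps unfolding skew_PBW_maps_def by blast+

lemma sigma_zero [simp]: "i < n \<Longrightarrow> \<sigma> i 0 = 0"
  and delta_zero [simp]: "i < n \<Longrightarrow> \<delta> i 0 = 0"
  using sigma_add[of i 0 0] delta_add[of i 0 0] by simp_all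

lemma x_mult_scalar_mult: "i < n \<Longrightarrow> r \<in> R \<Longrightarrow> x i * (r * h) = \<sigma> i r * (x i * h) + \<delta> i r * h"
  by (simp add: x_mult distrib_right mult.assoc[symmetric])

lemma unit_in_sigma:
  assumes i: "i < n" and c: "unit_in R c"
  shows "unit_in R (\<sigma> i c)"
proof -
  obtain c' where c': "c \<in> R" "c' \<in> R" "c * c' = 1" "c' * c = 1"
    using c unfolding unit_in_def by blast
  then have "\<sigma> i c * \<sigma> i c' = 1" "\<sigma> i c' * \<sigma> i c = 1"
    using i by (simp_all add: sigma_mult[symmetric] sigma_one)
  with i c' show ?thesis unfolding unit_in_def by auto
qed

lemma x_commute:
  assumes "j < i" "i < n"
  obtains d l where "unit_in R d" "l \<in> lin_span R x n" "x i * x j = d * x j * x i + l"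
proof -
  obtain d where "unit_in R d" "x i * x j - d * x j * x i \<in> lin_span R x n"
    using bijective assms unfolding bijective_skew_PBW_def by blast
  then show thesis by (intro that[of d "x i * x j - d * x j * x i"]) simp_all
qed

definition x_mult_leading :: "(nat \<Rightarrow> nat) \<Rightarrow> bool" where
  "x_mult_leading \<gamma> \<longleftrightarrow> (\<forall>i<n. \<exists>c. unit_in R c
     \<and> x i * X \<gamma> - c * X (\<gamma>(i := Suc (\<gamma> i))) \<in> deg_less (Suc (deg n \<gamma>)))"

lemma x_mult_deg_less_of_leading:
  assumes leading: "\<And>\<gamma>. \<gamma> \<in> exps n \<Longrightarrow> deg n \<gamma> < m \<Longrightarrow> x_mult_leading \<gamma>"
    and h: "h \<in> deg_less m" and j: "j < n"
  shows "x j * h \<in> deg_less (Suc m)"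
proof -
  have "x j * (coef h \<gamma> * X \<gamma>) \<in> deg_less (Suc m)" if \<gamma>: "\<gamma> \<in> supp (coef h)" for \<gamma>
  proof -
    let ?a = "coef h \<gamma>" and ?\<gamma>' = "\<gamma>(j := Suc (\<gamma> j))"
    have \<gamma>_exps: "\<gamma> \<in> exps n" and deg_\<gamma>: "deg n \<gamma> < m"
      using \<gamma> supp_coef_exps deg_less_supp[OF h] by auto
    obtain c where c: "unit_in R c" "x j * X \<gamma> - c * X ?\<gamma>' \<in> deg_less (Suc (deg n \<gamma>))"
      using leading[OF \<gamma>_exps deg_\<gamma>] j unfolding x_mult_leading_def by blast
    have "x j * (?a * X \<gamma>)
        = (\<sigma> j ?a * c) * X ?\<gamma>' + \<sigma> j ?a * (x j * X \<gamma> - c * X ?\<gamma>') + \<delta> j ?a * X \<gamma>"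
      using j by (simp add: x_mult_scalar_mult algebra_simps)
    moreover have "(\<sigma> j ?a * c) * X ?\<gamma>' \<in> deg_less (Suc m)"
      using j c(1) \<gamma>_exps deg_\<gamma>
      by (intro deg_less_monomial) (simp_all add: unit_in_mem exps_upd deg_upd_Suc)
    moreover have "\<sigma> j ?a * (x j * X \<gamma> - c * X ?\<gamma>') \<in> deg_less (Suc m)"
      using j c(2) deg_\<gamma> by (intro deg_less_lmult) (auto intro: deg_less_mono)
    moreover have "\<delta> j ?a * X \<gamma> \<in> deg_less (Suc m)"
      using j \<gamma>_exps deg_\<gamma> by (intro deg_less_monomial) simp_all
    ultimately show ?thesis by (simp add: deg_less_add)
  qed
  then have "(\<Sum>\<gamma>\<in>supp (coef h). x j * (coef h \<gamma> * X \<gamma>)) \<in> deg_less (Suc m)"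
    by (rule deg_less_sum)
  then show ?thesis by (subst coef_expand) (simp add: sum_distrib_left)
qed

lemma lin_span_mult_deg_less_of_leading:
  assumes leading: "\<And>\<gamma>. \<gamma> \<in> exps n \<Longrightarrow> deg n \<gamma> < m \<Longrightarrow> x_mult_leading \<gamma>"
    and l: "l \<in> lin_span R x n" and h: "h \<in> deg_less m"
  shows "l * h \<in> deg_less (Suc m)"
proof -
  obtain r0 r where r: "l = r0 + (\<Sum>k<n. r k * x k)" "r0 \<in> R" "\<forall>k<n. r k \<in> R"
    using l unfolding lin_span_def by blast
  have "l * h = r0 * h + (\<Sum>k<n. r k * (x k * h))"
    unfolding r(1) by (simp add: distrib_right sum_distrib_right mult.assoc)
  moreover have "r0 * h \<in> deg_less (Suc m)"
    using r(2) h by (intro deg_less_lmult) (auto intro: deg_less_mono)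
  moreover have "r k * (x k * h) \<in> deg_less (Suc m)" if "k < n" for k
  proof (rule deg_less_lmult)
    show "r k \<in> R" using r(3) that by blast
    show "x k * h \<in> deg_less (Suc m)" using leading h that by (rule x_mult_deg_less_of_leading)
  qed
  then have "(\<Sum>k<n. r k * (x k * h)) \<in> deg_less (Suc m)" by (intro deg_less_sum) simp
  ultimately show ?thesis by (simp add: deg_less_add)
qed

text \<open>
  Write X^\<gamma> = x_j X^\<gamma>' with x_j the first variable occurring in X^\<gamma>. Moving x_i past x_j costs
  the unit d_ji and a term of lin_span, whose product with X^\<gamma>' has lower degree.
\<close>
lemma x_mult_leading_step:
  assumes leading: "\<And>\<mu>. \<mu> \<in> exps n \<Longrightarrow> deg n \<mu> < deg n \<gamma> \<Longrightarrow> x_mult_leading \<mu>"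
    and \<gamma>: "\<gamma> \<in> exps n" and i: "i < n" and ji: "j < i"
    and \<gamma>j: "\<gamma> j \<noteq> 0" and below: "\<And>t. t < j \<Longrightarrow> \<gamma> t = 0"
  shows "\<exists>c. unit_in R c \<and> x i * X \<gamma> - c * X (\<gamma>(i := Suc (\<gamma> i))) \<in> deg_less (Suc (deg n \<gamma>))"
proof -
  have j: "j < n" using ji i by simp
  define \<gamma>' where "\<gamma>' = \<gamma>(j := \<gamma> j - 1)"
  define \<gamma>'' where "\<gamma>'' = \<gamma>'(i := Suc (\<gamma>' i))"
  have \<gamma>': "\<gamma>' \<in> exps n" "deg n \<gamma> = Suc (deg n \<gamma>')" "X \<gamma> = x j * X \<gamma>'"
    using \<gamma> j \<gamma>j below deg_upd_Suc[OF j, of \<gamma>'] mono_eq_x_mult[of j \<gamma>]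
    by (simp_all add: \<gamma>'_def exps_upd)
  have \<gamma>'': "\<gamma>'' \<in> exps n" "deg n \<gamma>'' = deg n \<gamma>" "x j * X \<gamma>'' = X (\<gamma>(i := Suc (\<gamma> i)))"
    using \<gamma>'(2) i ji below x_mult_mono[OF j, of \<gamma>''] deg_upd_Suc[OF i, of \<gamma>'] \<gamma>j
      exps_upd[OF \<gamma>'(1) i, of "Suc (\<gamma>' i)"]
    by (simp_all add: \<gamma>''_def \<gamma>'_def fun_upd_twist)
  obtain c where c: "unit_in R c" "x i * X \<gamma>' - c * X \<gamma>'' \<in> deg_less (deg n \<gamma>)"
    using leading[OF \<gamma>'(1)] \<gamma>'(2) i unfolding x_mult_leading_def \<gamma>''_def by auto
  obtain d l where d: "unit_in R d" "l \<in> lin_span R x n" "x i * x j = d * x j * x i + l"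
    using x_commute[OF ji i] by blast
  have c_mem: "c \<in> R" and d_mem: "d \<in> R" using c(1) d(1) by (simp_all add: unit_in_mem)
  have "x i * X \<gamma> = (x i * x j) * X \<gamma>'"
    unfolding \<gamma>'(3) by (simp add: mult.assoc)
  also have "\<dots> = d * (x j * (x i * X \<gamma>')) + l * X \<gamma>'"
    by (simp add: d(3) distrib_right mult.assoc)
  also have "x j * (x i * X \<gamma>') = x j * (c * X \<gamma>'') + x j * (x i * X \<gamma>' - c * X \<gamma>'')"
    by (simp add: right_diff_distrib)
  also have "x j * (c * X \<gamma>'') = \<sigma> j c * X (\<gamma>(i := Suc (\<gamma> i))) + \<delta> j c * X \<gamma>''"
    using j c_mem by (simp add: x_mult_scalar_mult \<gamma>''(3))
  finally have "x i * X \<gamma> - (d * \<sigma> j c) * X (\<gamma>(i := Suc (\<gamma> i)))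
      = d * (\<delta> j c * X \<gamma>'') + d * (x j * (x i * X \<gamma>' - c * X \<gamma>'')) + l * X \<gamma>'"
    by (simp add: algebra_simps)
  moreover have "d * (\<delta> j c * X \<gamma>'') \<in> deg_less (Suc (deg n \<gamma>))"
    using j c_mem d_mem \<gamma>'' by (intro deg_less_lmult deg_less_monomial) simp_all
  moreover have "d * (x j * (x i * X \<gamma>' - c * X \<gamma>'')) \<in> deg_less (Suc (deg n \<gamma>))"
    using d_mem leading c(2) j by (intro deg_less_lmult x_mult_deg_less_of_leading) auto
  moreover have "l * X \<gamma>' \<in> deg_less (Suc (deg n \<gamma>))"
    using leading d(2) by (rule lin_span_mult_deg_less_of_leading)
      (use \<gamma>' in \<open>auto intro: deg_less_monomial[of _ 1, simplified]\<close>)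
  moreover have "unit_in R (d * \<sigma> j c)" using d(1) c(1) j by (simp add: unit_in_mult unit_in_sigma)
  ultimately show ?thesis by (metis deg_less_add)
qed

lemma x_mult_leading_all: "\<gamma> \<in> exps n \<Longrightarrow> x_mult_leading \<gamma>"
proof (induction "deg n \<gamma>" arbitrary: \<gamma> rule: less_induct)
  case less
  show ?case unfolding x_mult_leading_def
  proof (intro allI impI)
    fix i assume i: "i < n"
    show "\<exists>c. unit_in R c \<and> x i * X \<gamma> - c * X (\<gamma>(i := Suc (\<gamma> i))) \<in> deg_less (Suc (deg n \<gamma>))"
    proof (cases "\<exists>t<i. \<gamma> t \<noteq> 0")
      case False
      then have "x i * X \<gamma> = X (\<gamma>(i := Suc (\<gamma> i)))" using i by (intro x_mult_mono) auto
      then show ?thesis using unit_in_one deg_less_zero by auto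
    next
      case True
      define j where "j = (LEAST t. t < i \<and> \<gamma> t \<noteq> 0)"
      have j: "j < i" "\<gamma> j \<noteq> 0" using LeastI_ex[OF True] unfolding j_def by auto
      have "\<gamma> t = 0" if "t < j" for t
        using not_less_Least[of t "\<lambda>t. t < i \<and> \<gamma> t \<noteq> 0"] that j(1) unfolding j_def by auto
      with less j i show ?thesis by (intro x_mult_leading_step) auto
    qed
  qed
qed

lemma x_mult_deg_less: "h \<in> deg_less m \<Longrightarrow> j < n \<Longrightarrow> x j * h \<in> deg_less (Suc m)"
  using x_mult_deg_less_of_leading x_mult_leading_all by blast

lemma x_mult_leading_term:
  assumes j: "j < n" and \<gamma>: "\<gamma> \<in> exps n" and r: "r \<in> R" and h: "h - r * X \<gamma> \<in> deg_less (deg n \<gamma>)"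
  obtains c where "unit_in R c"
    "x j * h - (\<sigma> j r * c) * X (\<gamma>(j := Suc (\<gamma> j))) \<in> deg_less (Suc (deg n \<gamma>))"
proof -
  let ?\<gamma>' = "\<gamma>(j := Suc (\<gamma> j))"
  obtain c where c: "unit_in R c" "x j * X \<gamma> - c * X ?\<gamma>' \<in> deg_less (Suc (deg n \<gamma>))"
    using x_mult_leading_all[OF \<gamma>] j unfolding x_mult_leading_def by blast
  have "x j * h - (\<sigma> j r * c) * X ?\<gamma>'
      = \<sigma> j r * (x j * X \<gamma> - c * X ?\<gamma>') + \<delta> j r * X \<gamma> + x j * (h - r * X \<gamma>)"
    using j r by (simp add: x_mult_scalar_mult algebra_simps)
  moreover have "\<sigma> j r * (x j * X \<gamma> - c * X ?\<gamma>') \<in> deg_less (Suc (deg n \<gamma>))"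
    using j r c(2) by (intro deg_less_lmult) simp_all
  moreover have "\<delta> j r * X \<gamma> \<in> deg_less (Suc (deg n \<gamma>))"
    using j r \<gamma> by (intro deg_less_monomial) simp_all
  moreover have "x j * (h - r * X \<gamma>) \<in> deg_less (Suc (deg n \<gamma>))"
    using h j by (rule x_mult_deg_less)
  ultimately show thesis using c(1) that by (simp add: deg_less_add)
qed

end

section \<open>Coefficients of zero products over a \<Sigma>-rigid ring\<close>

lemma sum_sum_eq_single:
  fixes F :: "'a \<Rightarrow> 'b \<Rightarrow> 'c::comm_monoid_add"
  assumes "finite A" "finite B" "a \<in> A" "b \<in> B"
    and "\<And>\<alpha> \<beta>. \<alpha> \<in> A \<Longrightarrow> \<beta> \<in> B \<Longrightarrow> (\<alpha>, \<beta>) \<noteq> (a, b) \<Longrightarrow> F \<alpha> \<beta> = 0"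
  shows "(\<Sum>\<alpha>\<in>A. \<Sum>\<beta>\<in>B. F \<alpha> \<beta>) = F a b"
proof -
  have "(\<Sum>\<alpha>\<in>A. \<Sum>\<beta>\<in>B. F \<alpha> \<beta>) = (\<Sum>p\<in>A \<times> B. F (fst p) (snd p))"
    by (simp add: sum.cartesian_product case_prod_beta')
  also have "\<dots> = (\<Sum>p\<in>{(a, b)}. F (fst p) (snd p))"
    using assms(1-4) by (intro sum.mono_neutral_right) (auto intro!: assms(5))
  finally show ?thesis by simp
qed

locale rigid_skew_PBW_ext = skew_PBW_ext +
  assumes rigid: "Sigma_rigid R \<sigma> n"
begin

lemma foldr_funpow_zero: "(\<forall>t\<in>set ts. \<alpha> t = 0) \<Longrightarrow> foldr (\<lambda>t f. (\<sigma> t ^^ \<alpha> t) \<circ> f) ts g = g"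
  by (induction ts) auto

lemma sigma_pow_single: "i < n \<Longrightarrow> sigma_pow \<sigma> n (\<lambda>t. if t = i then 1 else 0) = \<sigma> i"
proof -
  assume i: "i < n"
  have "[0..<n] = [0..<i] @ i # [Suc i..<n]"
    using i upt_add_eq_append[of 0 i "n - i"] upt_conv_Cons[of i n] by simp
  then show ?thesis unfolding sigma_pow_def by (simp add: foldr_funpow_zero)
qed

lemma reduced: "reduced R"
  unfolding reduced_def
proof (intro ballI impI)
  fix a assume "a \<in> R" "a * a = 0"
  moreover have "sigma_pow \<sigma> n 0 = id"
    unfolding sigma_pow_def by (rule foldr_funpow_zero) simp
  ultimately have "a * sigma_pow \<sigma> n 0 a = 0" by simp
  with \<open>a \<in> R\<close> show "a = 0" using rigid unfolding Sigma_rigid_def by blast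
qed

lemma square_eq_0: "a \<in> R \<Longrightarrow> a * a = 0 \<Longrightarrow> a = 0"
  using reduced unfolding reduced_def by blast

lemma sigma_rigid:
  assumes "i < n" "a \<in> R" "a * \<sigma> i a = 0"
  shows "a = 0"
proof -
  have "a * sigma_pow \<sigma> n (\<lambda>t. if t = i then 1 else 0) a = 0"
    using assms by (simp add: sigma_pow_single)
  with assms(2) show ?thesis using rigid unfolding Sigma_rigid_def by blast
qed

lemma mult_eq_0_commute: "a \<in> R \<Longrightarrow> b \<in> R \<Longrightarrow> a * b = 0 \<Longrightarrow> b * a = 0"
  using reduced by (rule reduced_mult_eq_0_commute)

lemma mult_sigma_eq_0_iff:
  assumes i: "i < n" and uv: "u \<in> R" "v \<in> R"
  shows "u * \<sigma> i v = 0 \<longleftrightarrow> u * v = 0"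
proof
  assume "u * \<sigma> i v = 0"
  have "(v * u) * \<sigma> i (v * u) = v * (u * \<sigma> i v) * \<sigma> i u"
    using i uv by (simp add: sigma_mult mult.assoc)
  also have "\<dots> = 0" by (simp only: \<open>u * \<sigma> i v = 0\<close> mult_zero_left mult_zero_right)
  finally have "(v * u) * \<sigma> i (v * u) = 0" .
  then have "v * u = 0" by (rule sigma_rigid[OF i, rotated]) (simp add: uv)
  then show "u * v = 0" using mult_eq_0_commute uv by blast
next
  assume "u * v = 0"
  then have "v * u = 0" using mult_eq_0_commute uv by blast
  have "(u * \<sigma> i v) * \<sigma> i (u * \<sigma> i v) = u * \<sigma> i (v * u) * \<sigma> i (\<sigma> i v)"
    using i uv by (simp add: sigma_mult mult.assoc)
  also have "\<dots> = 0" using \<open>v * u = 0\<close> i by simp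
  finally show "u * \<sigma> i v = 0" using sigma_rigid[of i "u * \<sigma> i v"] i uv by simp
qed

lemma mult_delta_eq_0:
  assumes i: "i < n" and ab: "a \<in> R" "b \<in> R" "a * b = 0"
  shows "a * \<delta> i b = 0"
proof -
  have "b * \<sigma> i a = 0"
    using mult_eq_0_commute[OF ab] mult_sigma_eq_0_iff[OF i ab(2,1)] by simp
  have "\<sigma> i a * \<delta> i b = - (\<delta> i a * b)"
    using delta_mult[OF i ab(1,2)] ab(3) i by (simp add: eq_neg_iff_add_eq_0)
  then have "(\<sigma> i a * \<delta> i b) * \<sigma> i a = - (\<delta> i a * (b * \<sigma> i a))"
    by (simp add: mult.assoc)
  also have "\<dots> = 0" using \<open>b * \<sigma> i a = 0\<close> by simp
  finally have "(\<delta> i b * \<sigma> i a) * (\<delta> i b * \<sigma> i a) = 0"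
    by (metis mult.assoc mult_zero_right)
  then have "\<delta> i b * \<sigma> i a = 0" by (rule square_eq_0[rotated]) (simp add: i ab)
  then have "\<delta> i b * a = 0" using mult_sigma_eq_0_iff[OF i _ ab(1), of "\<delta> i b"] i ab by simp
  then show ?thesis using mult_eq_0_commute[of "\<delta> i b" a] i ab by simp
qed

definition coef_ann :: "'a \<Rightarrow> 'a set" where
  "coef_ann a = {h. \<forall>\<gamma>. a * coef h \<gamma> = 0}"

lemma coef_ann_add: "h \<in> coef_ann a \<Longrightarrow> k \<in> coef_ann a \<Longrightarrow> h + k \<in> coef_ann a"
  unfolding coef_ann_def by (simp add: coef_add distrib_left)

lemma coef_ann_sum: "(\<And>i. i \<in> I \<Longrightarrow> h i \<in> coef_ann a) \<Longrightarrow> (\<Sum>i\<in>I. h i) \<in> coef_ann a"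
proof (induction I rule: infinite_finite_induct)
  case (insert i I)
  then show ?case by (simp add: coef_ann_add)
qed (simp_all add: coef_ann_def)

lemma scalar_mult_mem_coef_ann: "r \<in> R \<Longrightarrow> a * r = 0 \<Longrightarrow> r * h \<in> coef_ann a"
  unfolding coef_ann_def by (simp add: coef_lmult mult.assoc[symmetric])

lemma x_mult_mem_coef_ann:
  assumes a: "a \<in> R" and h: "h \<in> coef_ann a" and i: "i < n"
  shows "x i * h \<in> coef_ann a"
proof -
  have "x i * (coef h \<gamma> * X \<gamma>) \<in> coef_ann a" for \<gamma>
  proof -
    have "a * coef h \<gamma> = 0" using h unfolding coef_ann_def by blast
    then have "a * \<sigma> i (coef h \<gamma>) = 0" "a * \<delta> i (coef h \<gamma>) = 0"
      using a i mult_sigma_eq_0_iff mult_delta_eq_0 by simp_all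
    then show ?thesis
      using i by (simp add: x_mult_scalar_mult coef_ann_add scalar_mult_mem_coef_ann)
  qed
  then have "(\<Sum>\<gamma>\<in>supp (coef h). x i * (coef h \<gamma> * X \<gamma>)) \<in> coef_ann a"
    by (rule coef_ann_sum)
  then show ?thesis by (subst coef_expand) (simp add: sum_distrib_left)
qed

lemma mono_mult_mem_coef_ann:
  "\<alpha> \<in> exps n \<Longrightarrow> a \<in> R \<Longrightarrow> h \<in> coef_ann a \<Longrightarrow> X \<alpha> * h \<in> coef_ann a"
proof (induction "deg n \<alpha>" arbitrary: \<alpha>)
  case 0
  then have "\<alpha> = 0" using deg_eq_0[of \<alpha> n] by simp
  with 0 show ?case unfolding \<open>\<alpha> = 0\<close> mono_zero by simp
next
  case (Suc k)
  then obtain j \<alpha>' where "j < n" "\<alpha>' \<in> exps n" "deg n \<alpha>' = k" "X \<alpha> = x j * X \<alpha>'"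
    by (metis mono_first_factor)
  with Suc show ?case by (simp add: mult.assoc x_mult_mem_coef_ann)
qed

lemma mult_mono_mult_eq_0:
  assumes "\<alpha> \<in> exps n" "a \<in> R" "y \<in> R" "a * y = 0"
  shows "a * (X \<alpha> * y) = 0"
proof -
  have "y \<in> coef_ann a" using assms(3,4) scalar_mult_mem_coef_ann[of y a 1] by simp
  then have "X \<alpha> * y \<in> coef_ann a" using assms(1,2) by (intro mono_mult_mem_coef_ann)
  with assms(2) show ?thesis unfolding coef_ann_def by (auto intro: scalar_mult_eq_0I)
qed

lemma mult_scalar_eq_0I:
  assumes e: "e \<in> R" and coef_e: "\<And>\<alpha>. coef f \<alpha> * e = 0"
  shows "f * e = 0"
proof -
  have "f * e = (\<Sum>\<alpha>\<in>supp (coef f). coef f \<alpha> * (X \<alpha> * e))"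
    by (subst coef_expand) (simp add: sum_distrib_right mult.assoc)
  also have "\<dots> = 0"
    using e coef_e supp_coef_exps by (auto intro!: sum.neutral mult_mono_mult_eq_0)
  finally show ?thesis .
qed

text \<open>
  The leading coefficient is \<sigma>^\<alpha>(b) times a unit; rigidity makes \<sigma>^\<alpha>(b) and b have the same
  left annihilator in R.
\<close>
lemma mono_mult_leading:
  assumes "\<alpha> \<in> exps n" "\<beta> \<in> exps n" "b \<in> R"
  shows "\<exists>b' c. b' \<in> R \<and> unit_in R c \<and> (\<forall>u\<in>R. u * b' = 0 \<longleftrightarrow> u * b = 0)
    \<and> X \<alpha> * (b * X \<beta>) - (b' * c) * X (\<alpha> + \<beta>) \<in> deg_less (deg n \<alpha> + deg n \<beta>)"
  using assms(1)
proof (induction "deg n \<alpha>" arbitrary: \<alpha>)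
  case 0
  then have "\<alpha> = 0" using deg_eq_0[of \<alpha> n] by simp
  then show ?case using assms(3) unit_in_one deg_less_zero unfolding \<open>\<alpha> = 0\<close> mono_zero
    by (intro exI[of _ b] exI[of _ 1]) simp
next
  case (Suc k)
  obtain j \<alpha>' where j: "j < n" and \<alpha>': "\<alpha>' \<in> exps n" "deg n \<alpha>' = k"
    and \<alpha>_eq: "\<alpha> = \<alpha>'(j := Suc (\<alpha>' j))" and X\<alpha>: "X \<alpha> = x j * X \<alpha>'"
    using mono_first_factor[OF Suc.prems Suc.hyps(2)[symmetric]] by blast
  obtain b' c where b'c: "b' \<in> R" "unit_in R c" "\<forall>u\<in>R. u * b' = 0 \<longleftrightarrow> u * b = 0"
    "X \<alpha>' * (b * X \<beta>) - (b' * c) * X (\<alpha>' + \<beta>) \<in> deg_less (deg n (\<alpha>' + \<beta>))"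
    using Suc.hyps(1)[OF \<alpha>'(2)[symmetric] \<alpha>'(1)] by (auto simp: deg_add)
  have c_mem: "c \<in> R" using b'c(2) by (rule unit_in_mem)
  obtain c' where c': "unit_in R c'"
    "x j * (X \<alpha>' * (b * X \<beta>)) - (\<sigma> j (b' * c) * c') * X ((\<alpha>' + \<beta>)(j := Suc ((\<alpha>' + \<beta>) j)))
      \<in> deg_less (Suc (deg n (\<alpha>' + \<beta>)))"
    using x_mult_leading_term[OF j exps_add[OF \<alpha>'(1) assms(2)] _ b'c(4)] b'c(1) c_mem by auto
  have "(\<alpha>' + \<beta>)(j := Suc ((\<alpha>' + \<beta>) j)) = \<alpha> + \<beta>" unfolding \<alpha>_eq by auto
  moreover have "\<sigma> j (b' * c) * c' = \<sigma> j b' * (\<sigma> j c * c')"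
    using j b'c(1) c_mem by (simp add: sigma_mult mult.assoc)
  moreover have "Suc (deg n (\<alpha>' + \<beta>)) = deg n \<alpha> + deg n \<beta>"
    using Suc.hyps(2) \<alpha>'(2) by (simp add: deg_add)
  ultimately have "X \<alpha> * (b * X \<beta>) - (\<sigma> j b' * (\<sigma> j c * c')) * X (\<alpha> + \<beta>)
      \<in> deg_less (deg n \<alpha> + deg n \<beta>)"
    using c'(2) by (simp add: X\<alpha> mult.assoc)
  moreover have "unit_in R (\<sigma> j c * c')" using j b'c(2) c'(1) by (simp add: unit_in_mult unit_in_sigma)
  moreover have "\<forall>u\<in>R. u * \<sigma> j b' = 0 \<longleftrightarrow> u * b = 0"
    using j b'c(1,3) mult_sigma_eq_0_iff by simp
  ultimately show ?case using j b'c(1) by (intro exI[of _ "\<sigma> j b'"] exI[of _ "\<sigma> j c * c'"]) simp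
qed

lemma coef_mono_mult_above:
  assumes "\<alpha> \<in> exps n" "\<beta> \<in> exps n" "b \<in> R" "mono_less n (\<alpha> + \<beta>) \<gamma>"
  shows "coef (X \<alpha> * (b * X \<beta>)) \<gamma> = 0"
proof -
  obtain b' c where b'c: "b' \<in> R" "unit_in R c"
    "X \<alpha> * (b * X \<beta>) - (b' * c) * X (\<alpha> + \<beta>) \<in> deg_less (deg n \<alpha> + deg n \<beta>)"
    using mono_mult_leading[OF assms(1-3)] by blast
  have "deg n \<alpha> + deg n \<beta> \<le> deg n \<gamma>" using mono_less_deg[OF assms(4)] by (simp add: deg_add)
  then have "coef (X \<alpha> * (b * X \<beta>) - (b' * c) * X (\<alpha> + \<beta>)) \<gamma> = 0"
    using b'c(3) unfolding deg_less_def by blast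
  moreover have "\<gamma> \<noteq> \<alpha> + \<beta>" using assms(4) mono_less_irrefl by blast
  ultimately show ?thesis
    using assms b'c(1,2) by (simp add: coef_diff coef_mono exps_add unit_in_mem)
qed

lemma coef_mono_mult_top:
  assumes "\<alpha> \<in> exps n" "\<beta> \<in> exps n" "b \<in> R"
  obtains b' c where "b' \<in> R" "unit_in R c" "\<forall>u\<in>R. u * b' = 0 \<longleftrightarrow> u * b = 0"
    "coef (X \<alpha> * (b * X \<beta>)) (\<alpha> + \<beta>) = b' * c"
proof -
  obtain b' c where b'c: "b' \<in> R" "unit_in R c" "\<forall>u\<in>R. u * b' = 0 \<longleftrightarrow> u * b = 0"
    "X \<alpha> * (b * X \<beta>) - (b' * c) * X (\<alpha> + \<beta>) \<in> deg_less (deg n \<alpha> + deg n \<beta>)"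
    using mono_mult_leading[OF assms] by blast
  then have "coef (X \<alpha> * (b * X \<beta>) - (b' * c) * X (\<alpha> + \<beta>)) (\<alpha> + \<beta>) = 0"
    unfolding deg_less_def by (simp add: deg_add)
  with assms b'c(1,2) have "coef (X \<alpha> * (b * X \<beta>)) (\<alpha> + \<beta>) = b' * c"
    by (simp add: coef_diff coef_mono exps_add unit_in_mem)
  with b'c(1-3) show thesis by (rule that)
qed

lemma coef_mult_at_top:
  assumes \<beta>m: "\<beta>m \<in> supp (coef g)" "\<forall>\<beta>\<in>supp (coef g). \<beta> \<noteq> \<beta>m \<longrightarrow> mono_less n \<beta> \<beta>m"
    and \<alpha>0: "\<alpha>0 \<in> supp (coef f)"
    and above: "\<And>\<alpha>. mono_less n \<alpha>0 \<alpha> \<Longrightarrow> coef g \<beta>m * coef f \<alpha> = 0"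
  shows "coef g \<beta>m * coef (f * g) (\<alpha>0 + \<beta>m)
    = coef g \<beta>m * coef f \<alpha>0 * coef (X \<alpha>0 * (coef g \<beta>m * X \<beta>m)) (\<alpha>0 + \<beta>m)"
proof -
  let ?b = "coef g \<beta>m"
  have "?b * coef (f * g) (\<alpha>0 + \<beta>m) = (\<Sum>\<alpha>\<in>supp (coef f). \<Sum>\<beta>\<in>supp (coef g).
      ?b * coef f \<alpha> * coef (X \<alpha> * (coef g \<beta> * X \<beta>)) (\<alpha>0 + \<beta>m))"
    by (subst coef_mult) (simp add: sum_distrib_left mult.assoc)
  also have "\<dots> = ?b * coef f \<alpha>0 * coef (X \<alpha>0 * (?b * X \<beta>m)) (\<alpha>0 + \<beta>m)"
  proof (rule sum_sum_eq_single)
    fix \<alpha> \<beta> assume \<alpha>: "\<alpha> \<in> supp (coef f)" and \<beta>: "\<beta> \<in> supp (coef g)" and ne: "(\<alpha>, \<beta>) \<noteq> (\<alpha>0, \<beta>m)"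
    have exps: "\<alpha> \<in> exps n" "\<beta> \<in> exps n" "\<alpha>0 \<in> exps n"
      using \<alpha> \<beta> \<alpha>0 supp_coef_exps by auto
    show "?b * coef f \<alpha> * coef (X \<alpha> * (coef g \<beta> * X \<beta>)) (\<alpha>0 + \<beta>m) = 0"
    proof (cases "mono_less n \<alpha>0 \<alpha>")
      case True
      then show ?thesis using above by simp
    next
      case False
      then have "\<alpha> = \<alpha>0 \<or> mono_less n \<alpha> \<alpha>0" using mono_less_linear exps by blast
      moreover have "\<beta> = \<beta>m \<or> mono_less n \<beta> \<beta>m" using \<beta>m(2) \<beta> by blast
      ultimately have "mono_less n (\<alpha> + \<beta>) (\<alpha>0 + \<beta>m)"
        using ne by (intro mono_less_add_strict) auto
      then show ?thesis using exps by (simp add: coef_mono_mult_above)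
    qed
  qed (use \<alpha>0 \<beta>m(1) in simp_all)
  finally show ?thesis .
qed

text \<open>
  Let \<alpha>0 be the largest exponent with a_\<alpha>0 b \<noteq> 0, where b is the top coefficient of g. In
  b \<cdot> coef (f g) (\<alpha>0 + \<beta>m) = 0 only the term b a_\<alpha>0 b' c survives, so (a_\<alpha>0 b)^2 = 0.
\<close>
lemma coef_mult_top_eq_0:
  assumes fg: "f * g = 0"
    and \<beta>m: "\<beta>m \<in> supp (coef g)" "\<forall>\<beta>\<in>supp (coef g). \<beta> \<noteq> \<beta>m \<longrightarrow> mono_less n \<beta> \<beta>m"
  shows "coef f \<alpha> * coef g \<beta>m = 0"
proof (rule ccontr)
  let ?b = "coef g \<beta>m"
  define Bad where "Bad = {\<alpha> \<in> supp (coef f). coef f \<alpha> * ?b \<noteq> 0}"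
  assume "coef f \<alpha> * ?b \<noteq> 0"
  then have "\<alpha> \<in> Bad" unfolding Bad_def supp_def by auto
  moreover have "Bad \<subseteq> supp (coef f)" unfolding Bad_def by blast
  ultimately have "finite Bad" "Bad \<noteq> {}" "Bad \<subseteq> exps n"
    using finite_subset[OF _ finite_supp_coef] supp_coef_exps[of f] by blast+
  then obtain \<alpha>0 where \<alpha>0: "\<alpha>0 \<in> Bad" "\<forall>\<alpha>\<in>Bad. \<alpha> \<noteq> \<alpha>0 \<longrightarrow> mono_less n \<alpha> \<alpha>0"
    by (blast dest: exists_mono_less_max)
  have \<alpha>0_supp: "\<alpha>0 \<in> supp (coef f)" and \<alpha>0_exps: "\<alpha>0 \<in> exps n"
    using \<alpha>0(1) supp_coef_exps unfolding Bad_def by auto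
  have above: "?b * coef f \<alpha> = 0" if "mono_less n \<alpha>0 \<alpha>" for \<alpha>
  proof -
    have "\<alpha> \<noteq> \<alpha>0" using that mono_less_irrefl by blast
    then have "\<alpha> \<notin> Bad" using \<alpha>0(2) that mono_less_trans mono_less_irrefl by blast
    then have "coef f \<alpha> * ?b = 0" unfolding Bad_def supp_def by auto
    then show ?thesis by (rule mult_eq_0_commute[rotated 2]) simp_all
  qed
  obtain b' c where b'c: "b' \<in> R" "unit_in R c" "\<forall>u\<in>R. u * b' = 0 \<longleftrightarrow> u * ?b = 0"
    "coef (X \<alpha>0 * (?b * X \<beta>m)) (\<alpha>0 + \<beta>m) = b' * c"
    using \<beta>m(1) supp_coef_exps by (blast intro: coef_mono_mult_top[OF \<alpha>0_exps _ coef_mem])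
  have "(?b * coef f \<alpha>0 * b') * c = 0"
    using coef_mult_at_top[OF \<beta>m \<alpha>0_supp above] fg b'c(4) by (simp add: mult.assoc)
  then have "(?b * coef f \<alpha>0) * b' = 0" using b'c(2) by (rule unit_in_mult_cancel[rotated])
  then have "(?b * coef f \<alpha>0) * ?b = 0" using b'c(3) by simp
  then have "(coef f \<alpha>0 * ?b) * (coef f \<alpha>0 * ?b) = 0" by (simp add: mult.assoc)
  then have "coef f \<alpha>0 * ?b = 0" by (rule square_eq_0[rotated]) simp
  then show False using \<alpha>0(1) unfolding Bad_def by blast
qed

lemma coef_mult_eq_0: "f * g = 0 \<Longrightarrow> coef f \<alpha> * coef g \<beta> = 0"
proof (induction "card (supp (coef g))" arbitrary: g rule: less_induct)
  case less
  show ?case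
  proof (cases "supp (coef g) = {}")
    case True
    then show ?thesis unfolding supp_def by simp
  next
    case False
    then obtain \<beta>m where \<beta>m: "\<beta>m \<in> supp (coef g)" "\<forall>\<beta>\<in>supp (coef g). \<beta> \<noteq> \<beta>m \<longrightarrow> mono_less n \<beta> \<beta>m"
      using exists_mono_less_max[OF finite_supp_coef _ supp_coef_exps] by blast
    let ?b = "coef g \<beta>m"
    have top: "coef f \<alpha>' * ?b = 0" for \<alpha>'
      using less.prems \<beta>m by (rule coef_mult_top_eq_0)
    define g' where "g' = g - ?b * X \<beta>m"
    have \<beta>m_exps: "\<beta>m \<in> exps n" using \<beta>m(1) supp_coef_exps by blast
    have coef_g': "coef g' \<gamma> = (if \<gamma> = \<beta>m then 0 else coef g \<gamma>)" for \<gamma>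
      unfolding g'_def by (simp add: coef_diff coef_mono[OF \<beta>m_exps])
    then have "supp (coef g') = supp (coef g) - {\<beta>m}" unfolding supp_def by auto
    then have card: "card (supp (coef g')) < card (supp (coef g))"
      using card_Diff1_less[OF finite_supp_coef \<beta>m(1)] by simp
    have "f * (?b * X \<beta>m) = 0"
      using top mult_scalar_eq_0I[of ?b f] by (simp add: mult.assoc[symmetric])
    then have "f * g' = 0" unfolding g'_def using less.prems by (simp add: right_diff_distrib)
    then have "coef f \<alpha> * coef g' \<beta> = 0" using less.hyps[OF card] by blast
    then show ?thesis using top coef_g' by (cases "\<beta> = \<beta>m") simp_all
  qed
qed

subsection \<open>Property (a.c.)\<close>

theorem ac_right_if_right_pp:
  assumes "abelian_ring R" "right_pp R"
  shows "ac_right TYPE('a)"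
  unfolding ac_right_def
proof (intro allI)
  fix g :: "nat \<Rightarrow> 'a" and m
  define C where "C = (\<Union>k<m. range (coef (g k)))"
  have "finite C" "C \<subseteq> R" unfolding C_def using finite_range_coef by auto
  then obtain e where e: "e \<in> R" "\<forall>c\<in>C. c * e = 0" "\<forall>y\<in>R. (\<forall>c\<in>C. c * y = 0) \<longrightarrow> e * y = y"
    using abelian_right_pp_r_ann_finite[OF assms] by blast
  have "r_ann UNIV (right_ideal_gen g m) = r_ann UNIV {(1 - e) * t | t. True}"
  proof (rule r_ann_right_ideal_gen_eq)
    fix k assume "k < m"
    show "g k * e = 0" by (rule mult_scalar_eq_0I) (use e(1,2) \<open>k < m\<close> in \<open>auto simp: C_def\<close>)
  next
    fix h assume "\<And>k. k < m \<Longrightarrow> g k * h = 0"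
    then have "\<forall>c\<in>C. c * coef h \<beta> = 0" for \<beta> unfolding C_def using coef_mult_eq_0 by blast
    then have "e * coef h \<beta> = coef h \<beta>" for \<beta> using e(3) by simp
    then show "e * h = h" by (rule scalar_mult_eq_selfI[OF e(1)])
  qed
  then show "\<exists>c. r_ann UNIV (right_ideal_gen g m) = r_ann UNIV {c * t | t. True}" by blast
qed

theorem ac_left_if_left_pp:
  assumes "abelian_ring R" "left_pp R"
  shows "ac_left TYPE('a)"
  unfolding ac_left_def
proof (intro allI)
  fix g :: "nat \<Rightarrow> 'a" and m
  define C where "C = (\<Union>k<m. range (coef (g k)))"
  have "finite C" "C \<subseteq> R" unfolding C_def using finite_range_coef by auto
  then obtain e where e: "e \<in> R" "\<forall>c\<in>C. e * c = 0" "\<forall>y\<in>R. (\<forall>c\<in>C. y * c = 0) \<longrightarrow> y * e = y"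
    using abelian_left_pp_l_ann_finite[OF assms] by blast
  have "l_ann UNIV (left_ideal_gen g m) = l_ann UNIV {t * (1 - e) | t. True}"
  proof (rule l_ann_left_ideal_gen_eq)
    fix k assume "k < m"
    show "e * g k = 0" by (rule scalar_mult_eq_0I) (use e(1,2) \<open>k < m\<close> in \<open>auto simp: C_def\<close>)
  next
    fix h assume "\<And>k. k < m \<Longrightarrow> h * g k = 0"
    then have "\<forall>c\<in>C. coef h \<beta> * c = 0" for \<beta> unfolding C_def using coef_mult_eq_0 by blast
    then have "coef h \<beta> * (1 - e) = 0" for \<beta> using e(3) by (simp add: right_diff_distrib)
    then have "h * (1 - e) = 0" by (rule mult_scalar_eq_0I[rotated]) (simp add: e(1))
    then show "h * e = h" by (simp add: right_diff_distrib)
  qed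
  then show "\<exists>c. l_ann UNIV (left_ideal_gen g m) = l_ann UNIV {t * c | t. True}" by blast
qed

end

theorem mainTheorem3:
  fixes R :: "'a::ring_1 set" and x :: "nat \<Rightarrow> 'a" and n :: nat
    and \<sigma> \<delta> :: "nat \<Rightarrow> 'a \<Rightarrow> 'a"
  assumes "skew_PBW R x n"
    and "skew_PBW_maps R x n \<sigma> \<delta>"
    and "bijective_skew_PBW R x n \<sigma>"
    and "Sigma_rigid R \<sigma> n"
    and "abelian_ring R"
    and "NI_ring R"
  shows "(right_pp R \<longrightarrow> ac_right TYPE('a)) \<and> (left_pp R \<longrightarrow> ac_left TYPE('a))"
proof -
  interpret rigid_skew_PBW_ext R x n \<sigma> \<delta>
    using assms(1-4) by unfold_locales
  show ?thesis using ac_right_if_right_pp ac_left_if_left_pp assms(5) by blast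
qed

end
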